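(* Let $F\in\mathcal S^\sharp$ and $C>0$. There is a constant $K>0$ (depending on $C$ and $F$) such that for all $t\in[-C,0)$ and all $x\in\mathbb R$, \[ \widetilde{F_t}(x)\le K\exp\!\Bigl(\tfrac{10}{|t|}\min(x,-2)^2\Bigr). \] In particular $|F_t(x+iy)|\le K\exp\!\bigl(\tfrac{10}{|t|}\min(x,-2)^2\bigr)$ for all $x,y\in\mathbb R$.
   Context: The extended Selberg class $\mathcal S^\sharp$ is the set of functions $F$, not identically zero, such that: (i) $F(s)=\sum_{n\ge1}a_n n^{-s}$, with the series converging absolutely for $\Re s>1$; (ii) $(s-1)^mF(s)$ extends to an entire function of finite order for some integer $m\ge0$; (iii) letting $m$ be the order of the pole of $F$ at $s=1$ ($m=0$ if there is no pole), there is a function $\gamma(s)=\alpha s^m(s-1)^mQ^s\prod_{i=1}^k\Gamma(\omega_i s+\mu_i)$ with $\alpha\in\mathbb C\setminus\{0\}$, $Q>0$, an integer $k\ge1$, $\omega_i>0$ and $\mu_i\in\mathbb C$ with $\Re\mu_i\ge0$, such that the (entire) function $\xi^F(s):=\gamma(s)F(s)$ satisfies $\xi^F(s)=\overline{\xi^F(1-\bar s)}$ for all $s$. For $t<0$: $F_t(s):=\sum_{n\ge1}\exp\!\left(-\frac{|t|}{4}\log^2 n\right)a_n n^{-s}$ and $\widetilde{F_t}(x):=\sum_{n\ge1}\exp\!\left(-\frac{|t|}{4}\log^2 n\right)|a_n| n^{-x}$ for $x\in\mathbb R$. *)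

theory Defs
  imports "HOL-Analysis.Analysis"
begin

definition entire_finite_order :: "(complex \<Rightarrow> complex) \<Rightarrow> bool" where
  "entire_finite_order G \<longleftrightarrow> G holomorphic_on UNIV \<and>
     (\<exists>\<rho> c. \<forall>z. norm (G z) \<le> c * exp (norm z powr \<rho>))"

definition gamma_factor ::
  "complex \<Rightarrow> nat \<Rightarrow> real \<Rightarrow> nat \<Rightarrow> (nat \<Rightarrow> real) \<Rightarrow> (nat \<Rightarrow> complex) \<Rightarrow> complex \<Rightarrow> complex" where
  "gamma_factor \<alpha> m Q k \<omega> \<mu> s =
     \<alpha> * s ^ m * (s - 1) ^ m * (complex_of_real Q powr s) *
     (\<Prod>i<k. Gamma (complex_of_real (\<omega> i) * s + \<mu> i))"

text \<open>The extended Selberg class: F (defined on C minus {1}) with Dirichlet coefficients a n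
  (n >= 1; the value a 0 is irrelevant).\<close>
definition ext_selberg :: "(nat \<Rightarrow> complex) \<Rightarrow> (complex \<Rightarrow> complex) \<Rightarrow> bool" where
  "ext_selberg a F \<longleftrightarrow>
     (\<forall>s. Re s > 1 \<longrightarrow>
        summable (\<lambda>n. norm (a (Suc n) / of_nat (Suc n) powr s)) \<and>
        F s = (\<Sum>n. a (Suc n) / of_nat (Suc n) powr s)) \<and>
     (\<exists>s. s \<noteq> 1 \<and> F s \<noteq> 0) \<and>
     (\<exists>m::nat. \<exists>G. entire_finite_order G \<and>
        (\<forall>s. s \<noteq> 1 \<longrightarrow> G s = (s - 1) ^ m * F s) \<and>
        (m = 0 \<or> G 1 \<noteq> 0) \<and>
        (\<exists>\<alpha> Q k \<omega> \<mu> \<xi>. \<alpha> \<noteq> 0 \<and> Q > 0 \<and> k \<ge> 1 \<and>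
           (\<forall>i<k. \<omega> i > 0 \<and> Re (\<mu> i) \<ge> 0) \<and>
           \<xi> holomorphic_on UNIV \<and>
           (\<forall>s. Re s > 1 \<longrightarrow> \<xi> s = gamma_factor \<alpha> m Q k \<omega> \<mu> s * F s) \<and>
           (\<forall>s. \<xi> s = cnj (\<xi> (1 - cnj s)))))"

definition F_damped :: "(nat \<Rightarrow> complex) \<Rightarrow> real \<Rightarrow> complex \<Rightarrow> complex" where
  "F_damped a t s = (\<Sum>n. complex_of_real (exp (- (\<bar>t\<bar> / 4) * (ln (real (Suc n)))\<^sup>2))
                        * a (Suc n) / of_nat (Suc n) powr s)"

definition Ftilde_term :: "(nat \<Rightarrow> complex) \<Rightarrow> real \<Rightarrow> real \<Rightarrow> nat \<Rightarrow> real" where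
  "Ftilde_term a t x n = exp (- (\<bar>t\<bar> / 4) * (ln (real (Suc n)))\<^sup>2)
                        * norm (a (Suc n)) * real (Suc n) powr (- x)"

definition F_tilde :: "(nat \<Rightarrow> complex) \<Rightarrow> real \<Rightarrow> real \<Rightarrow> real" where
  "F_tilde a t x = (\<Sum>n. Ftilde_term a t x n)"

end

theory Submission
  imports Defs
begin

text \<open>Writing \<open>L = ln n\<close>, the damped term is \<open>|a n| n\<^sup>-\<^sup>2 \<cdot> exp (-(|t|/4) L\<^sup>2 + (2 - x) L)\<close>, and the
  exponent is a concave quadratic in \<open>L\<close> whose maximum \<open>(2 - x)\<^sup>2/|t|\<close> is at most
  \<open>10 min(x,-2)\<^sup>2/|t|\<close>. Hence every term is dominated by the corresponding term of the
  absolutely convergent series \<open>\<Sum> |a n| n\<^sup>-\<^sup>2\<close>, and \<open>K = 1 + \<Sum> |a n| n\<^sup>-\<^sup>2\<close> works.\<close>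

lemma concave_quadratic_le:
  fixes T L u :: real
  assumes "T > 0"
  shows "- (T/4) * L\<^sup>2 + u * L \<le> u\<^sup>2 / T"
proof -
  have "T * (- (T/4) * L\<^sup>2 + u * L) \<le> u\<^sup>2"
    using zero_le_power2[of "T*L/2 - u"] by (simp add: power2_eq_square algebra_simps)
  with assms show ?thesis
    by (simp add: pos_le_divide_eq mult.commute)
qed

lemma square_two_minus_le:
  fixes x :: real
  assumes "x < 2"
  shows "(2 - x)\<^sup>2 \<le> 10 * (min x (-2))\<^sup>2"
proof (cases "x \<le> -2")
  case True
  have "(2 - x)\<^sup>2 \<le> (-2*x)\<^sup>2"
    using True by (intro power_mono) auto
  moreover have "(-2*x)\<^sup>2 = 4 * x\<^sup>2"
    by (simp add: power2_eq_square)
  ultimately show ?thesis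
    using True zero_le_power2[of x] by linarith
next
  case False
  have "(2 - x)\<^sup>2 \<le> 4\<^sup>2"
    using False assms by (intro power_mono) auto
  with False show ?thesis by simp
qed

lemma damping_exponent_le:
  fixes T L x :: real
  assumes T: "T > 0" and L: "L \<ge> 0"
  shows "- (T/4) * L\<^sup>2 + (2 - x) * L \<le> 10 / T * (min x (-2))\<^sup>2"
proof (cases "x < 2")
  case True
  have "- (T/4) * L\<^sup>2 + (2 - x) * L \<le> (2 - x)\<^sup>2 / T"
    using concave_quadratic_le[OF T] .
  also have "\<dots> \<le> 10 / T * (min x (-2))\<^sup>2"
    using square_two_minus_le[OF True] T by (simp add: divide_right_mono)
  finally show ?thesis .
next
  case False
  have "- (T/4) * L\<^sup>2 \<le> 0" "(2 - x) * L \<le> 0"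
    using False T L by (simp_all add: mult_nonpos_nonneg)
  then have "- (T/4) * L\<^sup>2 + (2 - x) * L \<le> 0"
    by linarith
  also have "0 \<le> 10 / T * (min x (-2))\<^sup>2"
    using T by simp
  finally show ?thesis .
qed

lemma Ftilde_term_le:
  assumes "t \<noteq> 0"
  shows "Ftilde_term a t x n
    \<le> norm (a (Suc n) / of_nat (Suc n) powr (2::complex)) * exp (10 / \<bar>t\<bar> * (min x (-2))\<^sup>2)"
proof -
  define L where "L = ln (real (Suc n))"
  have L: "L \<ge> 0"
    unfolding L_def by simp
  have "norm (of_nat (Suc n) powr (2::complex)) = exp (2 * L)"
    using norm_powr_real[of "of_nat (Suc n)" 2] unfolding L_def by simp
  then have "norm (a (Suc n) / of_nat (Suc n) powr (2::complex)) = norm (a (Suc n)) / exp (2 * L)"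
    by (simp only: norm_divide)
  then have norm_eq: "norm (a (Suc n) / of_nat (Suc n) powr (2::complex)) = norm (a (Suc n)) * exp (- 2 * L)"
    by (simp add: exp_minus divide_inverse)
  have "Ftilde_term a t x n = exp (- (\<bar>t\<bar>/4) * L\<^sup>2) * norm (a (Suc n)) * exp (- x * L)"
    unfolding Ftilde_term_def L_def powr_def by simp
  also have "\<dots> = norm (a (Suc n)) * exp (- 2 * L) * exp (- (\<bar>t\<bar>/4) * L\<^sup>2 + (2 - x) * L)"
    by (simp add: exp_add[symmetric] algebra_simps)
  also have "\<dots> \<le> norm (a (Suc n)) * exp (- 2 * L) * exp (10 / \<bar>t\<bar> * (min x (-2))\<^sup>2)"
    using damping_exponent_le[OF _ L, of "\<bar>t\<bar>" x] assms by (intro mult_left_mono) auto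
  finally show ?thesis
    unfolding norm_eq .
qed

lemma F_tilde_le:
  assumes summable: "summable (\<lambda>n. norm (a (Suc n) / of_nat (Suc n) powr (2::complex)))"
    and "t \<noteq> 0"
  shows "summable (Ftilde_term a t x)"
    and "F_tilde a t x \<le> (\<Sum>n. norm (a (Suc n) / of_nat (Suc n) powr (2::complex)))
                           * exp (10 / \<bar>t\<bar> * (min x (-2))\<^sup>2)"
proof -
  define E where "E = exp (10 / \<bar>t\<bar> * (min x (-2))\<^sup>2)"
  have le: "Ftilde_term a t x n \<le> norm (a (Suc n) / of_nat (Suc n) powr (2::complex)) * E" for n
    unfolding E_def using Ftilde_term_le[OF \<open>t \<noteq> 0\<close>] .
  have dominant: "summable (\<lambda>n. norm (a (Suc n) / of_nat (Suc n) powr (2::complex)) * E)"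
    using summable by (rule summable_mult2)
  show summable_F: "summable (Ftilde_term a t x)"
    by (rule summable_comparison_test'[OF dominant]) (use le in \<open>auto simp: Ftilde_term_def\<close>)
  have "F_tilde a t x \<le> (\<Sum>n. norm (a (Suc n) / of_nat (Suc n) powr (2::complex)) * E)"
    unfolding F_tilde_def by (rule suminf_le[OF le summable_F dominant])
  also have "\<dots> = (\<Sum>n. norm (a (Suc n) / of_nat (Suc n) powr (2::complex))) * E"
    using summable by (simp add: suminf_mult2)
  finally show "F_tilde a t x \<le> (\<Sum>n. norm (a (Suc n) / of_nat (Suc n) powr (2::complex))) * E" .
qed

lemma norm_F_damped_le_F_tilde:
  assumes "summable (Ftilde_term a t x)"
  shows "norm (F_damped a t (Complex x y)) \<le> F_tilde a t x"
proof -
  define f where "f n = complex_of_real (exp (- (\<bar>t\<bar> / 4) * (ln (real (Suc n)))\<^sup>2))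
                        * a (Suc n) / of_nat (Suc n) powr (Complex x y)" for n
  have norm_f: "norm (f n) = Ftilde_term a t x n" for n
  proof -
    have "norm (of_nat (Suc n) powr (Complex x y)) = real (Suc n) powr x"
      using norm_powr_real_powr[of "of_nat (Suc n)" "Complex x y"] by simp
    then show ?thesis
      unfolding f_def Ftilde_term_def powr_minus_divide by (simp add: norm_divide norm_mult)
  qed
  have "norm (F_damped a t (Complex x y)) = norm (suminf f)"
    unfolding F_damped_def f_def by simp
  also have "\<dots> \<le> (\<Sum>n. norm (f n))"
    by (rule summable_norm) (simp add: norm_f assms)
  also have "\<dots> = F_tilde a t x"
    unfolding F_tilde_def norm_f by simp
  finally show ?thesis .
qed

theorem mainTheorem11:
  fixes a :: "nat \<Rightarrow> complex" and F :: "complex \<Rightarrow> complex" and C :: real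
  assumes "ext_selberg a F" and "C > 0"
  shows "\<exists>K>0. \<forall>t. -C \<le> t \<and> t < 0 \<longrightarrow>
           (\<forall>x::real. summable (Ftilde_term a t x) \<and>
              F_tilde a t x \<le> K * exp (10 / \<bar>t\<bar> * (min x (-2))\<^sup>2)) \<and>
           (\<forall>x y::real. norm (F_damped a t (Complex x y)) \<le> K * exp (10 / \<bar>t\<bar> * (min x (-2))\<^sup>2))"
proof -
  define S where "S = (\<Sum>n. norm (a (Suc n) / of_nat (Suc n) powr (2::complex)))"
  have summable: "summable (\<lambda>n. norm (a (Suc n) / of_nat (Suc n) powr (2::complex)))"
  proof -
    have "Re (2::complex) > 1" by simp
    with assms(1) show ?thesis
      unfolding ext_selberg_def by blast
  qed
  have "S \<ge> 0"
    unfolding S_def using summable by (simp add: suminf_nonneg)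
  show ?thesis
  proof (intro exI[of _ "S + 1"] conjI allI impI)
    show "S + 1 > 0"
      using \<open>S \<ge> 0\<close> by simp
  next
    fix t x y :: real
    assume "-C \<le> t \<and> t < 0"
    then have "t \<noteq> 0" by simp
    show summable_F: "summable (Ftilde_term a t x)"
      using F_tilde_le(1)[OF summable \<open>t \<noteq> 0\<close>] .
    have "F_tilde a t x \<le> S * exp (10 / \<bar>t\<bar> * (min x (-2))\<^sup>2)"
      unfolding S_def using F_tilde_le(2)[OF summable \<open>t \<noteq> 0\<close>] .
    also have "\<dots> \<le> (S + 1) * exp (10 / \<bar>t\<bar> * (min x (-2))\<^sup>2)"
      by simp
    finally show F_tilde_bound: "F_tilde a t x \<le> (S + 1) * exp (10 / \<bar>t\<bar> * (min x (-2))\<^sup>2)" .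
    show "norm (F_damped a t (Complex x y)) \<le> (S + 1) * exp (10 / \<bar>t\<bar> * (min x (-2))\<^sup>2)"
      using norm_F_damped_le_F_tilde[OF summable_F, of y] F_tilde_bound by (rule order_trans)
  qed
qed

end
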